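(* Let $k$ be a positive integer, $q\in\mathbb C\setminus\{0\}$, and let $\nu_1,\dots,\nu_k$ be commuting variables; work in the commutative algebra obtained from $\mathbb C[\nu_1,\dots,\nu_k]$ by inverting all differences $\nu_{r_1}-\nu_{r_2}$, $1\le r_1<r_2\le k$. Let $e_i:=e_i(\nu_1,\dots,\nu_k)$ for $0\le i\le k$ and $e_i:=0$ for $i>k$, and define $\mathfrak p'_1,\mathfrak p'_2,\dots$ recursively by $$\sum_{i=0}^{m-1}(-q)^ie_i\,\mathfrak p'_{m-i}=(-1)^{m-1}m_q\,e_m,\qquad m=1,2,\dots.$$ Then, with $\delta_j:=\prod_{r=1,\,r\ne j}^{k}\frac{\nu_j-q^{-2}\nu_r}{\nu_j-\nu_r}$, $$\mathfrak p'_i=q^{i-1}\sum_{j=1}^k\delta_j\,\nu_j^{\,i}\quad (i=1,2,\dots),\qquad\text{and}\qquad q^{-1}\sum_{j=1}^k\delta_j=q^{-k}k_q.$$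
   Context: $e_i(\nu_1,\dots,\nu_k)$ is the $i$-th elementary symmetric polynomial ($e_0=1$). For an integer $m\ge0$, $m_q:=q^{m-1}+q^{m-3}+\dots+q^{1-m}$. *)

theory Defs
  imports Complex_Main
begin

definition esym :: "nat \<Rightarrow> (nat \<Rightarrow> complex) \<Rightarrow> nat \<Rightarrow> complex" where
  "esym k \<nu> i = (\<Sum>S\<in>{S. S \<subseteq> {1..k} \<and> card S = i}. \<Prod>r\<in>S. \<nu> r)"

definition qint :: "complex \<Rightarrow> nat \<Rightarrow> complex" where
  "qint q m = (\<Sum>j<m. q powi (int m - 1 - 2 * int j))"

definition delta :: "nat \<Rightarrow> complex \<Rightarrow> (nat \<Rightarrow> complex) \<Rightarrow> nat \<Rightarrow> complex" where
  "delta k q \<nu> j = (\<Prod>r\<in>{1..k} - {j}. (\<nu> j - q powi (-2) * \<nu> r) / (\<nu> j - \<nu> r))"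

end

theory Submission
  imports Defs
begin

(*
  Write a = q^-2 and [n]_a = 1 + a + ... + a^(n-1) (qnum a n), so that m_q = q^(m-1) [m]_a.
  The polynomial sum_j delta_j prod_{r<>j} (x - nu_r) has degree < k and takes the value
  prod_{r<>j} (nu_j - a nu_r) at the node nu_j.  An explicit polynomial in the e_s with the same
  values at the k distinct nodes is sum_s (-a)^s [k-s]_a e_s x^(k-1-s); comparing coefficients gives
  sum_j delta_j e_s(nu without nu_j) = a^s [k-s]_a e_s, whose case s = 0 is the second claim.
  Together with sum_{i<=n} (-1)^i e_i nu_j^(n+1-i) = (-1)^n (e_{n+1} - e_{n+1}(nu without nu_j))
  this shows that q^(i-1) sum_j delta_j nu_j^i satisfies the defining recursion, and that
  recursion has a unique solution because e_0 = 1.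
*)

lemma sum_atMost_shift_down:
  fixes g h :: "nat \<Rightarrow> 'a::comm_monoid_add"
  assumes "g 0 = 0" "h n = 0" "\<And>t. g (Suc t) = h t"
  shows "(\<Sum>s\<le>n. g s) = (\<Sum>t\<le>n. h t)"
proof -
  have "(\<Sum>s\<le>n. g s) = (\<Sum>s\<le>Suc n. g s)" using assms by simp
  also have "\<dots> = g 0 + (\<Sum>t\<le>n. g (Suc t))" by (rule sum.atMost_Suc_shift)
  finally show ?thesis using assms by simp
qed

definition esym_on :: "'b set \<Rightarrow> ('b \<Rightarrow> 'a::comm_ring_1) \<Rightarrow> nat \<Rightarrow> 'a" where
  "esym_on A \<nu> i = (\<Sum>S\<in>{S. S \<subseteq> A \<and> card S = i}. \<Prod>r\<in>S. \<nu> r)"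

lemma esym_eq_esym_on: "esym k \<nu> = esym_on {1..k} \<nu>"
  by (simp add: fun_eq_iff esym_def esym_on_def)

lemma esym_on_0: "finite A \<Longrightarrow> esym_on A \<nu> 0 = 1"
proof -
  assume "finite A"
  then have "{S. S \<subseteq> A \<and> card S = 0} = {{}}"
    by (auto dest: finite_subset)
  then show ?thesis by (simp add: esym_on_def)
qed

lemma esym_on_eq_0: "finite A \<Longrightarrow> card A < i \<Longrightarrow> esym_on A \<nu> i = 0"
proof -
  assume "finite A" "card A < i"
  then have no_subsets: "{S. S \<subseteq> A \<and> card S = i} = {}"
    using card_mono[of A] by (auto simp: not_le[symmetric])
  show ?thesis unfolding esym_on_def no_subsets by simp
qed

lemma esym_on_insert_Suc:
  assumes "finite A" "j \<notin> A"
  shows "esym_on (insert j A) \<nu> (Suc s) = esym_on A \<nu> (Suc s) + \<nu> j * esym_on A \<nu> s"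
proof -
  let ?X = "{S. S \<subseteq> A \<and> card S = Suc s}" and ?Y = "{S. S \<subseteq> A \<and> card S = s}"
  have sub: "finite T \<and> j \<notin> T" if "T \<subseteq> A" for T
    using that assms finite_subset by blast
  have "{S. S \<subseteq> insert j A \<and> card S = Suc s}
      = ?X \<union> {insert j T |T. T \<subseteq> A \<and> card (insert j T) = Suc s}"
    by (rule subset_insert_lemma[of j A "\<lambda>T. card T = Suc s"])
  also have "{insert j T |T. T \<subseteq> A \<and> card (insert j T) = Suc s} = insert j ` ?Y"
  proof -
    have "T \<subseteq> A \<and> card (insert j T) = Suc s \<longleftrightarrow> T \<subseteq> A \<and> card T = s" for T
      using sub[of T] by (auto simp: card_insert_if)
    then show ?thesis by blast
  qed
  finally have split: "{S. S \<subseteq> insert j A \<and> card S = Suc s} = ?X \<union> insert j ` ?Y" .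
  have disjoint: "?X \<inter> insert j ` ?Y = {}"
    using assms(2) by blast
  have inj: "inj_on (insert j) ?Y"
    by (intro inj_onI) (simp add: insert_ident sub)
  have prod_insert: "(\<Prod>r\<in>insert j T. \<nu> r) = \<nu> j * (\<Prod>r\<in>T. \<nu> r)" if "T \<in> ?Y" for T
    using that sub by simp
  show ?thesis
    unfolding esym_on_def split
    using assms(1) disjoint
    by (simp add: sum.union_disjoint sum.reindex[OF inj] prod_insert sum_distrib_left)
qed

lemma esym_on_insert:
  assumes "finite A" "j \<notin> A"
  shows "esym_on (insert j A) \<nu> s = esym_on A \<nu> s + (if s = 0 then 0 else \<nu> j * esym_on A \<nu> (s - 1))"
  using assms by (cases s) (simp_all add: esym_on_0 esym_on_insert_Suc)

lemma prod_diff_eq_sum_esym_on: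
  assumes "finite A"
  shows "(\<Prod>r\<in>A. x - c * \<nu> r) = (\<Sum>s\<le>card A. (-c)^s * esym_on A \<nu> s * x^(card A - s))"
  using assms
proof (induction A rule: finite_induct)
  case empty
  then show ?case by (simp add: esym_on_0)
next
  case (insert j A)
  let ?n = "card A" and ?e = "esym_on A \<nu>"
  have vanish: "?e (Suc ?n) = 0"
    using insert(1) by (simp add: esym_on_eq_0)
  have "(\<Sum>s\<le>card (insert j A). (-c)^s * esym_on (insert j A) \<nu> s * x^(card (insert j A) - s))
     = (\<Sum>s\<le>Suc ?n. (-c)^s * ?e s * x^(Suc ?n - s))
       + (\<Sum>s\<le>Suc ?n. if s = 0 then 0 else (-c)^s * (\<nu> j * ?e (s - 1)) * x^(Suc ?n - s))"
    unfolding sum.distrib[symmetric] using insert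
    by (intro sum.cong) (auto simp: esym_on_insert algebra_simps)
  also have "(\<Sum>s\<le>Suc ?n. (-c)^s * ?e s * x^(Suc ?n - s)) = x * (\<Sum>s\<le>?n. (-c)^s * ?e s * x^(?n - s))"
    using vanish by (simp add: sum_distrib_left Suc_diff_le mult_ac)
  also have "(\<Sum>s\<le>Suc ?n. if s = 0 then 0 else (-c)^s * (\<nu> j * ?e (s - 1)) * x^(Suc ?n - s))
     = (\<Sum>t\<le>Suc ?n. (-c)^Suc t * (\<nu> j * ?e t) * x^(?n - t))"
    by (rule sum_atMost_shift_down) (use vanish in auto)
  also have "\<dots> = - c * \<nu> j * (\<Sum>s\<le>?n. (-c)^s * ?e s * x^(?n - s))"
    using vanish by (simp add: sum_distrib_left algebra_simps)
  finally show ?case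
    using insert by (simp add: algebra_simps)
qed

lemma sum_esym_on_remove_eq_sum_prod:
  assumes "finite A"
  shows "(\<Sum>t\<le>card A - 1. (-1)^t * (\<Sum>j\<in>A. w j * esym_on (A - {j}) \<nu> t) * x^(card A - 1 - t))
       = (\<Sum>j\<in>A. w j * (\<Prod>r\<in>A - {j}. x - \<nu> r))"
proof -
  let ?n = "card A - 1"
  have card_remove: "card (A - {j}) = ?n" if "j \<in> A" for j
    using assms that by simp
  have "(\<Sum>t\<le>?n. (-1)^t * (\<Sum>j\<in>A. w j * esym_on (A - {j}) \<nu> t) * x^(?n - t))
      = (\<Sum>t\<le>?n. \<Sum>j\<in>A. w j * ((-1)^t * esym_on (A - {j}) \<nu> t * x^(?n - t)))"
    by (simp add: sum_distrib_left sum_distrib_right mult_ac)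
  also have "\<dots> = (\<Sum>j\<in>A. \<Sum>t\<le>?n. w j * ((-1)^t * esym_on (A - {j}) \<nu> t * x^(?n - t)))"
    by (rule sum.swap)
  also have "\<dots> = (\<Sum>j\<in>A. w j * (\<Sum>t\<le>?n. (-1)^t * esym_on (A - {j}) \<nu> t * x^(?n - t)))"
    by (simp add: sum_distrib_left)
  also have "\<dots> = (\<Sum>j\<in>A. w j * (\<Prod>r\<in>A - {j}. x - \<nu> r))"
    using prod_diff_eq_sum_esym_on[of "A - {_}" x 1 \<nu>] assms card_remove by simp
  finally show ?thesis .
qed

lemma sum_alternating_esym_on_power:
  assumes "finite A" "j \<in> A"
  shows "(\<Sum>i\<le>n. (-1)^i * esym_on A \<nu> i * \<nu> j^(Suc n - i))
       = (-1)^n * (esym_on A \<nu> (Suc n) - esym_on (A - {j}) \<nu> (Suc n))"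
proof (induction n)
  case 0
  have "esym_on A \<nu> (Suc 0) = esym_on (A - {j}) \<nu> (Suc 0) + \<nu> j"
    using esym_on_insert_Suc[of "A - {j}" j \<nu> 0] assms by (simp add: insert_absorb esym_on_0)
  then show ?case
    using assms(1) by (simp add: esym_on_0)
next
  case (Suc n)
  have "esym_on A \<nu> (Suc (Suc n)) = esym_on (A - {j}) \<nu> (Suc (Suc n)) + \<nu> j * esym_on (A - {j}) \<nu> (Suc n)"
    using esym_on_insert_Suc[of "A - {j}" j \<nu> "Suc n"] assms by (simp add: insert_absorb)
  moreover have "(\<Sum>i\<le>Suc n. (-1)^i * esym_on A \<nu> i * \<nu> j^(Suc (Suc n) - i))
      = \<nu> j * (\<Sum>i\<le>n. (-1)^i * esym_on A \<nu> i * \<nu> j^(Suc n - i)) + (-1)^Suc n * esym_on A \<nu> (Suc n) * \<nu> j"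
    by (simp add: sum_distrib_left Suc_diff_le mult_ac)
  ultimately show ?case
    unfolding Suc.IH by (simp add: algebra_simps)
qed

definition qnum :: "'a::comm_semiring_1 \<Rightarrow> nat \<Rightarrow> 'a" where
  "qnum a n = (\<Sum>i<n. a^i)"

lemma qnum_0 [simp]: "qnum a 0 = 0"
  by (simp add: qnum_def)

lemma qnum_Suc: "qnum a (Suc n) = 1 + a * qnum a n"
  unfolding qnum_def by (subst sum.lessThan_Suc_shift) (simp add: sum_distrib_left)

lemma qnum_add: "qnum a (m + n) = qnum a m + a^m * qnum a n"
  by (induction m) (simp_all add: qnum_Suc algebra_simps)

lemma qint_eq_qnum:
  assumes "q \<noteq> 0" "m \<ge> 1"
  shows "qint q m = q^(m-1) * qnum (q powi -2) m"
  unfolding qint_def qnum_def sum_distrib_left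
proof (rule sum.cong[OF refl])
  fix j
  have "q^(m-1) * (q powi -2)^j = q powi (int (m-1)) * q powi (-2 * int j)"
    by (simp only: power_int_mult power_int_of_nat)
  also have "\<dots> = q powi (int (m-1) + (-2 * int j))"
    by (rule power_int_add[symmetric]) (use assms(1) in simp)
  also have "int (m-1) + (-2 * int j) = int m - 1 - 2 * int j"
    using assms(2) by simp
  finally show "q powi (int m - 1 - 2 * int j) = q^(m-1) * (q powi -2)^j" by simp
qed

lemma polyfun_rev_coeff_eq_0:
  fixes C :: "nat \<Rightarrow> 'a::{idom,real_normed_div_algebra}"
  assumes "finite X" "n < card X" "\<And>x. x \<in> X \<Longrightarrow> (\<Sum>t\<le>n. C t * x^(n-t)) = 0" "s \<le> n"
  shows "C s = 0"
proof (rule ccontr)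
  assume "C s \<noteq> 0"
  let ?roots = "{x. (\<Sum>i\<le>n. C (n - i) * x^i) = 0}"
  have "(\<Sum>t\<le>n. C t * x^(n-t)) = (\<Sum>i\<le>n. C (n - i) * x^i)" for x
    using sum.atLeastAtMost_rev[of "\<lambda>t. C t * x^(n-t)" 0 n] by (simp add: atMost_atLeast0)
  then have "X \<subseteq> ?roots"
    using assms(3) by auto
  moreover have "finite ?roots" "card ?roots \<le> n"
    using polyfun_roots_finite[of "\<lambda>i. C (n - i)" "n - s" n]
      polyfun_roots_card[of "\<lambda>i. C (n - i)" "n - s" n] \<open>C s \<noteq> 0\<close> assms(4)
    by simp_all
  ultimately have "card X \<le> n"
    using card_mono order_trans by blast
  then show False
    using assms(2) by simp
qed

definition delta_on :: "'b set \<Rightarrow> 'a::field \<Rightarrow> ('b \<Rightarrow> 'a) \<Rightarrow> 'b \<Rightarrow> 'a" where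
  "delta_on A a \<nu> j = (\<Prod>r\<in>A - {j}. (\<nu> j - a * \<nu> r) / (\<nu> j - \<nu> r))"

lemma delta_eq_delta_on: "delta k q \<nu> = delta_on {1..k} (q powi -2) \<nu>"
  by (simp add: fun_eq_iff delta_def delta_on_def)

lemma sum_qnum_esym_on_insert_eq_prod:
  assumes "finite A" "j \<notin> A"
  shows "(\<Sum>s\<le>card A. (-a)^s * qnum a (Suc (card A) - s) * esym_on (insert j A) \<nu> s * \<nu> j^(card A - s))
       = (\<Prod>r\<in>A. \<nu> j - a * \<nu> r)"
proof -
  let ?n = "card A" and ?e = "esym_on A \<nu>" and ?x = "\<nu> j"
  have "(\<Sum>s\<le>?n. (-a)^s * qnum a (Suc ?n - s) * esym_on (insert j A) \<nu> s * ?x^(?n - s))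
     = (\<Sum>s\<le>?n. (-a)^s * qnum a (Suc ?n - s) * ?e s * ?x^(?n - s))
     + (\<Sum>s\<le>?n. if s = 0 then 0 else (-a)^s * qnum a (Suc ?n - s) * ?x * ?e (s - 1) * ?x^(?n - s))"
    unfolding sum.distrib[symmetric]
    by (intro sum.cong) (auto simp: esym_on_insert[OF assms] algebra_simps)
  also have "(\<Sum>s\<le>?n. if s = 0 then 0 else (-a)^s * qnum a (Suc ?n - s) * ?x * ?e (s - 1) * ?x^(?n - s))
     = (\<Sum>t\<le>?n. (-a)^Suc t * qnum a (?n - t) * ?e t * ?x^(?n - t))"
  proof (rule sum_atMost_shift_down)
    fix t
    have power: "?x^(?n - t) = ?x * ?x^(?n - Suc t)" if "t < ?n"
      using that by (metis Suc_diff_Suc power_Suc)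
    show "(if Suc t = 0 then 0 else (-a)^Suc t * qnum a (Suc ?n - Suc t) * ?x * ?e (Suc t - 1) * ?x^(?n - Suc t))
      = (-a)^Suc t * qnum a (?n - t) * ?e t * ?x^(?n - t)"
      by (cases "t < ?n") (simp_all add: power)
  qed simp_all
  also have "(\<Sum>s\<le>?n. (-a)^s * qnum a (Suc ?n - s) * ?e s * ?x^(?n - s))
     + (\<Sum>t\<le>?n. (-a)^Suc t * qnum a (?n - t) * ?e t * ?x^(?n - t))
     = (\<Sum>s\<le>?n. (-a)^s * ?e s * ?x^(?n - s))"
    unfolding sum.distrib[symmetric]
    by (intro sum.cong) (simp_all add: Suc_diff_le qnum_Suc algebra_simps)
  also have "\<dots> = (\<Prod>r\<in>A. ?x - a * \<nu> r)"
    by (rule prod_diff_eq_sum_esym_on[OF assms(1), symmetric])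
  finally show ?thesis .
qed

lemma sum_qnum_esym_on_eq_prod_at_node:
  assumes "finite A" "i \<in> A"
  shows "(\<Sum>t\<le>card A - 1. (-a)^t * qnum a (card A - t) * esym_on A \<nu> t * \<nu> i^(card A - 1 - t))
       = (\<Prod>r\<in>A - {i}. \<nu> i - a * \<nu> r)"
proof -
  have reinsert: "insert i (A - {i}) = A"
    using assms(2) by blast
  have card_remove: "card (A - {i}) = card A - 1"
    using assms by simp
  have "card A > 0"
    using assms card_gt_0_iff by blast
  then have card_A: "Suc (card A - 1) = card A"
    by simp
  show ?thesis
    using sum_qnum_esym_on_insert_eq_prod[of "A - {i}" i a \<nu>] assms(1)
    unfolding reinsert card_remove card_A by simp
qed

lemma sum_delta_on_lagrange_basis_at_node:
  fixes \<nu> :: "'b \<Rightarrow> 'a::field"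
  assumes "finite A" "inj_on \<nu> A" "i \<in> A"
  shows "(\<Sum>j\<in>A. delta_on A a \<nu> j * (\<Prod>r\<in>A - {j}. \<nu> i - \<nu> r)) = (\<Prod>r\<in>A - {i}. \<nu> i - a * \<nu> r)"
proof -
  have "(\<Sum>j\<in>A. delta_on A a \<nu> j * (\<Prod>r\<in>A - {j}. \<nu> i - \<nu> r))
      = delta_on A a \<nu> i * (\<Prod>r\<in>A - {i}. \<nu> i - \<nu> r)"
    using assms(1,3) by (subst sum.remove[of _ i]) (auto intro!: sum.neutral)
  also have "\<dots> = (\<Prod>r\<in>A - {i}. \<nu> i - a * \<nu> r)"
    unfolding delta_on_def prod.distrib[symmetric]
  proof (rule prod.cong[OF refl])
    fix r assume "r \<in> A - {i}"
    then have "\<nu> i - \<nu> r \<noteq> 0"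
      using assms(2,3) by (auto dest: inj_onD)
    then show "(\<nu> i - a * \<nu> r) / (\<nu> i - \<nu> r) * (\<nu> i - \<nu> r) = \<nu> i - a * \<nu> r"
      by simp
  qed
  finally show ?thesis .
qed

lemma sum_delta_on_esym_on_remove:
  fixes \<nu> :: "'b \<Rightarrow> 'a::real_normed_field"
  assumes "finite A" "inj_on \<nu> A"
  shows "(\<Sum>j\<in>A. delta_on A a \<nu> j * esym_on (A - {j}) \<nu> s) = a^s * qnum a (card A - s) * esym_on A \<nu> s"
proof (cases "s < card A")
  case False
  have "esym_on (A - {j}) \<nu> s = 0" if "j \<in> A" for j
    using that assms(1) False card_gt_0_iff[of A] by (intro esym_on_eq_0) auto
  then show ?thesis
    using False by simp
next
  case True
  let ?n = "card A - 1"
  let ?L = "\<lambda>t. (\<Sum>j\<in>A. delta_on A a \<nu> j * esym_on (A - {j}) \<nu> t)"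
  let ?R = "\<lambda>t. (-a)^t * qnum a (card A - t) * esym_on A \<nu> t"
  define C where "C t = (-1)^t * ?L t - ?R t" for t
  have "C t = 0" if "t \<le> ?n" for t
  proof (rule polyfun_rev_coeff_eq_0[of "\<nu> ` A" ?n])
    show "?n < card (\<nu> ` A)"
      using True card_image[OF assms(2)] by simp
    fix x assume "x \<in> \<nu> ` A"
    then obtain i where i: "i \<in> A" "x = \<nu> i" by blast
    have "(\<Sum>t\<le>?n. C t * x^(?n - t)) = (\<Sum>t\<le>?n. (-1)^t * ?L t * x^(?n - t)) - (\<Sum>t\<le>?n. ?R t * x^(?n - t))"
      unfolding C_def left_diff_distrib sum_subtractf ..
    also have "\<dots> = 0"
      unfolding sum_esym_on_remove_eq_sum_prod[OF assms(1)] i(2) sum_qnum_esym_on_eq_prod_at_node[OF assms(1) i(1)]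
        sum_delta_on_lagrange_basis_at_node[OF assms i(1)]
      by simp
    finally show "(\<Sum>t\<le>?n. C t * x^(?n - t)) = 0" .
  qed (use assms(1) that in auto)
  then have coeff: "(-1)^s * ?L s = ?R s"
    using True by (simp add: C_def)
  have sign: "(-1::'a)^s * (-1)^s = 1" "(-1::'a)^s * (-a)^s = a^s"
    by (simp_all flip: power_mult_distrib)
  have "?L s = ((-1)^s * (-1)^s) * ?L s"
    by (simp add: sign)
  also have "\<dots> = (-1)^s * ?R s"
    using coeff by (simp only: mult.assoc)
  also have "\<dots> = a^s * qnum a (card A - s) * esym_on A \<nu> s"
    by (simp only: mult.assoc[symmetric] sign(2))
  finally show ?thesis .
qed

lemma sum_delta_on:
  fixes \<nu> :: "'b \<Rightarrow> 'a::real_normed_field"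
  assumes "finite A" "inj_on \<nu> A"
  shows "(\<Sum>j\<in>A. delta_on A a \<nu> j) = qnum a (card A)"
  using sum_delta_on_esym_on_remove[OF assms, of a 0] assms(1) by (simp add: esym_on_0)

lemma sum_delta_on_alternating_power:
  fixes \<nu> :: "'b \<Rightarrow> 'a::real_normed_field"
  assumes "finite A" "inj_on \<nu> A"
  shows "(\<Sum>j\<in>A. delta_on A a \<nu> j * (\<Sum>i\<le>n. (-1)^i * esym_on A \<nu> i * \<nu> j^(Suc n - i)))
       = (-1)^n * qnum a (Suc n) * esym_on A \<nu> (Suc n)"
proof -
  let ?e = "esym_on A \<nu> (Suc n)"
  have "(\<Sum>j\<in>A. delta_on A a \<nu> j * (\<Sum>i\<le>n. (-1)^i * esym_on A \<nu> i * \<nu> j^(Suc n - i)))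
      = (\<Sum>j\<in>A. delta_on A a \<nu> j * ((-1)^n * (?e - esym_on (A - {j}) \<nu> (Suc n))))"
    using assms(1) by (simp add: sum_alternating_esym_on_power)
  also have "\<dots> = (-1)^n * (?e * (\<Sum>j\<in>A. delta_on A a \<nu> j)
      - (\<Sum>j\<in>A. delta_on A a \<nu> j * esym_on (A - {j}) \<nu> (Suc n)))"
    by (simp add: sum_distrib_left sum_subtractf right_diff_distrib mult_ac)
  also have "\<dots> = (-1)^n * (?e * qnum a (card A) - a^Suc n * qnum a (card A - Suc n) * ?e)"
    unfolding sum_delta_on[OF assms] sum_delta_on_esym_on_remove[OF assms] by (simp only: mult_ac)
  also have "\<dots> = (-1)^n * qnum a (Suc n) * ?e"
  proof (cases "Suc n \<le> card A")
    case True
    then have "qnum a (card A) = qnum a (Suc n) + a^Suc n * qnum a (card A - Suc n)"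
      using qnum_add[of a "Suc n" "card A - Suc n"] by simp
    then show ?thesis by (simp add: algebra_simps)
  next
    case False
    then have "?e = 0"
      using assms(1) by (simp add: esym_on_eq_0)
    then show ?thesis by simp
  qed
  finally show ?thesis .
qed

lemma power_sums_delta_on_recursion:
  fixes \<nu> :: "'b \<Rightarrow> 'a::real_normed_field"
  assumes "finite A" "inj_on \<nu> A"
  shows "(\<Sum>i\<le>n. (-q)^i * esym_on A \<nu> i * (q^(n-i) * (\<Sum>j\<in>A. delta_on A a \<nu> j * \<nu> j^(Suc n - i))))
       = (-1)^n * q^n * qnum a (Suc n) * esym_on A \<nu> (Suc n)"
proof -
  let ?term = "\<lambda>i j. delta_on A a \<nu> j * ((-1)^i * esym_on A \<nu> i * \<nu> j^(Suc n - i))"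
  have sign: "(-q)^i * q^(n-i) = (-1)^i * q^n" if "i \<le> n" for i
    using that by (subst power_minus) (simp add: mult.assoc flip: power_add)
  have "(\<Sum>i\<le>n. (-q)^i * esym_on A \<nu> i * (q^(n-i) * (\<Sum>j\<in>A. delta_on A a \<nu> j * \<nu> j^(Suc n - i))))
      = (\<Sum>i\<le>n. q^n * (\<Sum>j\<in>A. ?term i j))"
  proof (rule sum.cong[OF refl])
    fix i assume "i \<in> {..n}"
    then have "(-q)^i * esym_on A \<nu> i * (q^(n-i) * (\<Sum>j\<in>A. delta_on A a \<nu> j * \<nu> j^(Suc n - i)))
        = ((-q)^i * q^(n-i)) * (\<Sum>j\<in>A. esym_on A \<nu> i * (delta_on A a \<nu> j * \<nu> j^(Suc n - i)))"
      by (simp add: sum_distrib_left mult_ac)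
    also have "\<dots> = q^n * (\<Sum>j\<in>A. ?term i j)"
      using sign \<open>i \<in> {..n}\<close> by (simp add: sum_distrib_left mult_ac)
    finally show "(-q)^i * esym_on A \<nu> i * (q^(n-i) * (\<Sum>j\<in>A. delta_on A a \<nu> j * \<nu> j^(Suc n - i)))
        = q^n * (\<Sum>j\<in>A. ?term i j)" .
  qed
  also have "\<dots> = q^n * (\<Sum>i\<le>n. \<Sum>j\<in>A. ?term i j)"
    by (simp only: sum_distrib_left)
  also have "\<dots> = q^n * (\<Sum>j\<in>A. \<Sum>i\<le>n. ?term i j)"
    by (simp only: sum.swap[of _ "{..n}"])
  also have "\<dots> = q^n * ((-1)^n * qnum a (Suc n) * esym_on A \<nu> (Suc n))"
    using sum_delta_on_alternating_power[OF assms, of a n] by (simp add: sum_distrib_left)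
  finally show ?thesis
    by (simp add: mult_ac)
qed

lemma triangular_recursion_unique:
  fixes c u v :: "nat \<Rightarrow> 'a::ring_1"
  assumes "c 0 = 1"
    and "\<And>m. 1 \<le> m \<Longrightarrow> (\<Sum>i=0..m-1. c i * u (m - i)) = (\<Sum>i=0..m-1. c i * v (m - i))"
    and "1 \<le> m"
  shows "u m = v m"
  using assms(3)
proof (induction m rule: less_induct)
  case (less m)
  have split: "(\<Sum>i=0..m-1. f i) = f 0 + (\<Sum>i=1..m-1. f i)" for f :: "nat \<Rightarrow> 'a"
    by (simp add: sum.atLeast_Suc_atMost)
  have "(\<Sum>i=1..m-1. c i * u (m - i)) = (\<Sum>i=1..m-1. c i * v (m - i))"
    using less.IH by (intro sum.cong) auto
  then show ?case
    using assms(2)[OF less.prems] assms(1)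
      split[of "\<lambda>i. c i * u (m - i)"] split[of "\<lambda>i. c i * v (m - i)"]
    by simp
qed

lemma power_int_minus_one_eq:
  fixes q :: "'a::division_ring"
  assumes "q \<noteq> 0" "1 \<le> k"
  shows "q powi (-1) = q powi (- int k) * q^(k-1)"
proof -
  have "q powi (- int k) * q^(k-1) = q powi (- int k) * q powi (int (k-1))"
    by (simp only: power_int_of_nat)
  also have "\<dots> = q powi (- int k + int (k-1))"
    by (rule power_int_add[symmetric]) (use assms(1) in simp)
  also have "- int k + int (k-1) = -1"
    using assms(2) by simp
  finally show ?thesis by simp
qed

lemma power_sums_delta_recursion:
  fixes q :: complex and \<nu> :: "nat \<Rightarrow> complex"
  assumes "q \<noteq> 0" "inj_on \<nu> {1..k}" "1 \<le> m"
  shows "(\<Sum>i=0..m-1. (-q)^i * esym k \<nu> i * (q^(m-i-1) * (\<Sum>j=1..k. delta k q \<nu> j * \<nu> j^(m-i))))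
       = (-1)^(m-1) * qint q m * esym k \<nu> m"
proof -
  obtain n where m: "m = Suc n"
    using assms(3) not0_implies_Suc by force
  have "(\<Sum>i=0..m-1. (-q)^i * esym k \<nu> i * (q^(m-i-1) * (\<Sum>j=1..k. delta k q \<nu> j * \<nu> j^(m-i))))
      = (-1)^n * q^n * qnum (q powi (-2)) m * esym k \<nu> m"
    using power_sums_delta_on_recursion[of "{1..k}" \<nu> q n "q powi (-2)"] assms(2)
    unfolding m esym_eq_esym_on delta_eq_delta_on by (simp add: atMost_atLeast0)
  also have "\<dots> = (-1)^(m-1) * qint q m * esym k \<nu> m"
    using qint_eq_qnum[OF assms(1,3)] by (simp add: m)
  finally show ?thesis .
qed

theorem lemma6p6:
  fixes k :: nat and q :: complex and \<nu> :: "nat \<Rightarrow> complex" and p :: "nat \<Rightarrow> complex"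
  assumes "k \<ge> 1"
    and "q \<noteq> 0"
    and "inj_on \<nu> {1..k}"
    and rec: "\<And>m. m \<ge> 1 \<Longrightarrow>
      (\<Sum>i=0..m-1. (-q)^i * esym k \<nu> i * p (m - i)) = (-1)^(m-1) * qint q m * esym k \<nu> m"
  shows "(\<forall>i\<ge>1. p i = q^(i-1) * (\<Sum>j=1..k. delta k q \<nu> j * \<nu> j ^ i))
    \<and> q powi (-1) * (\<Sum>j=1..k. delta k q \<nu> j) = q powi (- int k) * qint q k"
proof -
  have "p m = q^(m-1) * (\<Sum>j=1..k. delta k q \<nu> j * \<nu> j ^ m)" if "1 \<le> m" for m
  proof (rule triangular_recursion_unique[where c = "\<lambda>i. (-q)^i * esym k \<nu> i", OF _ _ that])
    show "(-q)^0 * esym k \<nu> 0 = 1"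
      by (simp add: esym_eq_esym_on esym_on_0)
  next
    fix m :: nat assume "1 \<le> m"
    show "(\<Sum>i=0..m-1. (-q)^i * esym k \<nu> i * p (m - i))
        = (\<Sum>i=0..m-1. (-q)^i * esym k \<nu> i * (q^(m-i-1) * (\<Sum>j=1..k. delta k q \<nu> j * \<nu> j^(m-i))))"
      unfolding rec[OF \<open>1 \<le> m\<close>] power_sums_delta_recursion[OF assms(2,3) \<open>1 \<le> m\<close>] ..
  qed
  moreover have "q powi (-1) * (\<Sum>j=1..k. delta k q \<nu> j) = q powi (- int k) * qint q k"
    using sum_delta_on[of "{1..k}" \<nu> "q powi (-2)"] assms(3) qint_eq_qnum[OF assms(2,1)]
      power_int_minus_one_eq[OF assms(2,1)]
    by (simp add: delta_eq_delta_on mult.assoc)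
  ultimately show ?thesis
    by blast
qed

end
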